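(* There is a constant $c>0$ such that for all integers $n\ge 2$ and $\tau\ge 1$ there exist a value $\varepsilon\ge 0$ and a set $\mathcal X$ of $n$ entities, each moving along a trajectory of $\tau$ edges (in general position), whose Reeb graph $\mathcal R$ has at least $c\,\tau n^2$ vertices and at least $c\,\tau n^2$ edges. In other words, the Reeb graph can have $\Omega(\tau n^2)$ vertices and $\Omega(\tau n^2)$ edges.
   Context: Let $\mathcal X$ be a set of $n$ entities. All trajectories are sampled at common times $t_0<t_1<\dots<t_\tau$; each entity $x$ has a position $x(t_i)\in\mathbb R^2$ at each $t_i$ and moves with constant velocity between consecutive sample times, so its trajectory is a polygonal path with $\tau$ edges defined on $[t_0,t_\tau]$. Fix $\varepsilon\ge 0$. Two entities $x,y$ are directly connected at time $t$ if their closed discs of radius $\varepsilon$ centred at $x(t)$ and $y(t)$ intersect, i.e. $\|x(t)-y(t)\|\le 2\varepsilon$. They are $\varepsilon$-connected at time $t$ if there is a sequence $x=x_0,\dots,x_k=y$ of entities with $x_i,x_{i+1}$ directly connected at $t$ for all $i$. A component at time $t$ is a maximal set of pairwise $\varepsilon$-connected entities; the components at time $t$ partition $\mathcal X$. General position: no two distinct events at which a pair of entities becomes directly connected or directly disconnected occur at the same time. The Reeb graph $\mathcal R$ is the directed graph describing the evolution of the components over $[t_0,t_\tau]$: it has a start vertex for each component at $t_0$ (in-degree 0, out-degree 1), an end vertex for each component at $t_\tau$ (in-degree 1, out-degree 0), a merge vertex (in-degree 2, out-degree 1) at each time two components unite into one, and a split vertex (in-degree 1, out-degree 2) at each time a component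 splits into two; each vertex $v$ has a time $t_v$, and each edge $e=(u,v)$ with $t_u<t_v$ corresponds to a set $C_e$ of entities that is a component at every time in $[t_u,t_v]$. *)

theory Defs
  imports "HOL-Analysis.Analysis"
begin

text \<open>Entities are 0,...,n-1. Sample times T 0 < T 1 < ... < T tau.
  P x i :: real^2 is the position of entity x at sample time T i; between consecutive
  sample times the entity moves with constant velocity. Outside [T 0, T tau] the
  position is clamped (irrelevant: everything below is restricted to [T 0, T tau]).\<close>

definition traj :: "(nat \<Rightarrow> real) \<Rightarrow> nat \<Rightarrow> (nat \<Rightarrow> real^2) \<Rightarrow> real \<Rightarrow> real^2" where
  "traj T tau p s =
     (if s \<le> T 0 then p 0
      else if T tau \<le> s then p tau
      else (let i = (THE i. i < tau \<and> T i \<le> s \<and> s < T (Suc i))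
            in p i + ((s - T i) / (T (Suc i) - T i)) *\<^sub>R (p (Suc i) - p i)))"

text \<open>Direct connection: the closed eps-discs around the two positions intersect.\<close>
definition dconn :: "nat \<Rightarrow> (nat \<Rightarrow> real) \<Rightarrow> (nat \<Rightarrow> nat \<Rightarrow> real^2) \<Rightarrow> real
    \<Rightarrow> nat \<Rightarrow> nat \<Rightarrow> real \<Rightarrow> bool" where
  "dconn tau T P eps x y s \<longleftrightarrow> dist (traj T tau (P x) s) (traj T tau (P y) s) \<le> 2 * eps"

definition conn_rel :: "nat \<Rightarrow> nat \<Rightarrow> (nat \<Rightarrow> real) \<Rightarrow> (nat \<Rightarrow> nat \<Rightarrow> real^2) \<Rightarrow> real
    \<Rightarrow> real \<Rightarrow> (nat \<times> nat) set" where
  "conn_rel n tau T P eps s = {(x, y). x < n \<and> y < n \<and> dconn tau T P eps x y s}"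

definition comps :: "nat \<Rightarrow> nat \<Rightarrow> (nat \<Rightarrow> real) \<Rightarrow> (nat \<Rightarrow> nat \<Rightarrow> real^2) \<Rightarrow> real
    \<Rightarrow> real \<Rightarrow> nat set set" where
  "comps n tau T P eps s = {..<n} // (conn_rel n tau T P eps s)\<^sup>*"

definition event :: "nat \<Rightarrow> nat \<Rightarrow> (nat \<Rightarrow> real) \<Rightarrow> (nat \<Rightarrow> nat \<Rightarrow> real^2) \<Rightarrow> real
    \<Rightarrow> nat \<Rightarrow> nat \<Rightarrow> real \<Rightarrow> bool" where
  "event n tau T P eps x y s \<longleftrightarrow> x < n \<and> y < n \<and> x \<noteq> y \<and> T 0 \<le> s \<and> s \<le> T tau \<and>
     (\<forall>\<delta>>0. \<exists>s1 s2. \<bar>s1 - s\<bar> < \<delta> \<and> \<bar>s2 - s\<bar> < \<delta> \<and>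
        dconn tau T P eps x y s1 \<and> \<not> dconn tau T P eps x y s2)"

text \<open>General position: every event is a single clean event (the pair becomes connected
  or becomes disconnected at s, not both, e.g. no tangential touching), and events of
  different pairs never happen at the same time.\<close>
definition general_position :: "nat \<Rightarrow> nat \<Rightarrow> (nat \<Rightarrow> real) \<Rightarrow> (nat \<Rightarrow> nat \<Rightarrow> real^2)
    \<Rightarrow> real \<Rightarrow> bool" where
  "general_position n tau T P eps \<longleftrightarrow>
     (\<forall>x y s. event n tau T P eps x y s \<longrightarrow>
        (\<exists>\<delta>>0. \<exists>b. (\<forall>s'. s - \<delta> < s' \<and> s' < s \<longrightarrow> dconn tau T P eps x y s' = b) \<and>
                   (\<forall>s'. s < s' \<and> s' < s + \<delta> \<longrightarrow> dconn tau T P eps x y s' = (\<not> b)))) \<and>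
     (\<forall>x y x' y' s. event n tau T P eps x y s \<and> event n tau T P eps x' y' s
        \<longrightarrow> {x, y} = {x', y'})"

text \<open>Times in (T 0, T tau) at which the component partition changes; under general
  position these are exactly the times of the merge and split vertices.\<close>
definition change_time :: "nat \<Rightarrow> nat \<Rightarrow> (nat \<Rightarrow> real) \<Rightarrow> (nat \<Rightarrow> nat \<Rightarrow> real^2)
    \<Rightarrow> real \<Rightarrow> real \<Rightarrow> bool" where
  "change_time n tau T P eps s \<longleftrightarrow>
     \<not> (\<exists>\<delta>>0. \<forall>s'. \<bar>s' - s\<bar> < \<delta> \<longrightarrow> comps n tau T P eps s' = comps n tau T P eps s)"

text \<open>Number of vertices of the Reeb graph: start vertices + end vertices +
  merge/split vertices.\<close>
definition reeb_vertex_count :: "nat \<Rightarrow> nat \<Rightarrow> (nat \<Rightarrow> real) \<Rightarrow> (nat \<Rightarrow> nat \<Rightarrow> real^2)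
    \<Rightarrow> real \<Rightarrow> nat" where
  "reeb_vertex_count n tau T P eps =
     card (comps n tau T P eps (T 0)) + card (comps n tau T P eps (T tau)) +
     card {s. T 0 < s \<and> s < T tau \<and> change_time n tau T P eps s}"

definition lifetime :: "nat \<Rightarrow> nat \<Rightarrow> (nat \<Rightarrow> real) \<Rightarrow> (nat \<Rightarrow> nat \<Rightarrow> real^2)
    \<Rightarrow> real \<Rightarrow> nat set \<Rightarrow> real set" where
  "lifetime n tau T P eps C = {s. T 0 \<le> s \<and> s \<le> T tau \<and> C \<in> comps n tau T P eps s}"

text \<open>Edges of the Reeb graph: each edge e corresponds to a set C_e together with a maximal
  time interval on which C_e is a component (a connected component of its lifetime).\<close>
definition reeb_edges :: "nat \<Rightarrow> nat \<Rightarrow> (nat \<Rightarrow> real) \<Rightarrow> (nat \<Rightarrow> nat \<Rightarrow> real^2)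
    \<Rightarrow> real \<Rightarrow> (nat set \<times> real set) set" where
  "reeb_edges n tau T P eps =
     {(C, J). C \<subseteq> {..<n} \<and> J \<in> components (lifetime n tau T P eps C)}"

end

theory Submission
  imports Defs
begin

text \<open>
  Take k = n - n div 2 stationary entities at positions 3j on a line, and m = n div 2 entities
  moving rigidly together, mover i sitting at sweep(s) - 2 - 3ki, where the sweep runs from 0 to
  W = 3km + 2 and back along consecutive trajectory edges. With \<epsilon> = 1/2 two entities of the same
  kind are always at distance at least 3, while mover i and stationary entity j are directly
  connected exactly when the sweep is within 1 of the level 3(j + ki) + 2. The km levels are
  distinct and lie in [2, W - 3], so on each of the \<tau> edges every mixed pair forms a two-element
  component during a time window of length 2. The left ends of these windows are \<tau>km distinct
  change times, the windows are \<tau>km distinct Reeb edges, and km \<ge> n^2/8.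

  General position holds because the sweep has slope \<plusminus>1 at every event, so each pair crosses
  distance 1 transversally, and because all levels are 2 modulo 3, so the crossing values
  level \<plusminus> 1 of distinct pairs never coincide.
\<close>

section \<open>Piecewise-linear interpolation\<close>

text \<open>The scalar counterpart of traj; trajectories along a fixed line reduce to it by traj_line.\<close>

definition interp :: "(nat \<Rightarrow> real) \<Rightarrow> nat \<Rightarrow> (nat \<Rightarrow> real) \<Rightarrow> real \<Rightarrow> real" where
  "interp T tau f s =
     (if s \<le> T 0 then f 0
      else if T tau \<le> s then f tau
      else (let i = (THE i. i < tau \<and> T i \<le> s \<and> s < T (Suc i))
            in f i + ((s - T i) / (T (Suc i) - T i)) * (f (Suc i) - f i)))"

lemma traj_line:
  "traj T tau (\<lambda>l. (a + b * f l) *\<^sub>R v) s = (a + b * interp T tau f s) *\<^sub>R v"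
proof -
  have "\<And>x y r. (a + b * x) *\<^sub>R v + r *\<^sub>R ((a + b * y) *\<^sub>R v - (a + b * x) *\<^sub>R v)
      = (a + b * (x + r * (y - x))) *\<^sub>R v"
    by (simp add: algebra_simps)
  then show ?thesis
    unfolding traj_def interp_def Let_def by simp
qed

lemma sample_times_le:
  fixes T :: "nat \<Rightarrow> real"
  assumes "\<forall>i<tau. T i < T (Suc i)" "i \<le> j" "j \<le> tau"
  shows "T i \<le> T j"
  using assms(2,3)
proof (induction j)
  case (Suc j)
  show ?case
  proof (cases "i = Suc j")
    case False
    then have "T i \<le> T j" using Suc by simp
    also have "T j < T (Suc j)" using assms(1) Suc.prems by simp
    finally show ?thesis by simp
  qed simp
qed simp

lemma interp_below: "s \<le> T 0 \<Longrightarrow> interp T tau f s = f 0"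
  by (simp add: interp_def)

lemma interp_above:
  assumes T: "\<forall>i<tau. T i < T (Suc i)" and s: "T tau \<le> s"
  shows "interp T tau f s = f tau"
proof (cases "T 0 < s")
  case False
  have "tau = 0"
  proof (rule ccontr)
    assume "tau \<noteq> 0"
    then have "T 0 < T 1" "T 1 \<le> T tau" using T sample_times_le[OF T, of 1 tau] by auto
    then show False using False s by simp
  qed
  then show ?thesis using False by (simp add: interp_below)
qed (use s in \<open>simp add: interp_def\<close>)

lemma interp_inner:
  assumes T: "\<forall>i<tau. T i < T (Suc i)" and s: "T 0 < s" "s < T tau"
    and i: "i < tau" "T i \<le> s" "s < T (Suc i)"
  shows "interp T tau f s = f i + (s - T i) / (T (Suc i) - T i) * (f (Suc i) - f i)"
proof -
  have "(THE i. i < tau \<and> T i \<le> s \<and> s < T (Suc i)) = i"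
  proof (rule the_equality)
    fix j assume j: "j < tau \<and> T j \<le> s \<and> s < T (Suc j)"
    have "\<not> j < i" using sample_times_le[OF T, of "Suc j" i] i j by force
    moreover have "\<not> i < j" using sample_times_le[OF T, of "Suc i" j] i j by force
    ultimately show "j = i" by simp
  qed (use i in simp)
  then show ?thesis using s unfolding interp_def Let_def by simp
qed

lemma interp_segment:
  assumes T: "\<forall>i<tau. T i < T (Suc i)" and l: "l < tau" and s: "T l \<le> s" "s \<le> T (Suc l)"
  shows "interp T tau f s = f l + (s - T l) / (T (Suc l) - T l) * (f (Suc l) - f l)"
proof -
  have step: "T l < T (Suc l)" using T l by simp
  consider "s \<le> T 0" | "T tau \<le> s" | "T 0 < s" "s < T tau" "s < T (Suc l)"
    | "T 0 < s" "s < T tau" "s = T (Suc l)"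
    using s by fastforce
  then show ?thesis
  proof cases
    case 1
    have "T 0 < T (Suc 0)" using T l by simp
    then have "l = 0" using sample_times_le[OF T, of 1 l] s 1 l by fastforce
    moreover have "s = T 0" using sample_times_le[OF T, of 0 l] s 1 l by simp
    ultimately show ?thesis using interp_below[of s T, OF 1] by simp
  next
    case 2
    have "\<not> Suc l < tau"
    proof
      assume "Suc l < tau"
      then have "T (Suc l) < T (Suc (Suc l))" using T by simp
      also have "\<dots> \<le> T tau" using sample_times_le[OF T] \<open>Suc l < tau\<close> by simp
      finally show False using s 2 by simp
    qed
    then have "Suc l = tau" using l by simp
    moreover have "s = T (Suc l)" using calculation s 2 by simp
    ultimately show ?thesis using interp_above[OF T 2] step by simp
  next
    case 3
    then show ?thesis using interp_inner[OF T 3(1,2) l s(1)] by simp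
  next
    case 4
    then have "Suc l \<noteq> tau" by auto
    then have "Suc l < tau" using l by simp
    moreover have "(s - T l) / (T (Suc l) - T l) = 1" using 4 step by simp
    ultimately show ?thesis using interp_inner[OF T 4(1,2), of "Suc l"] 4 T by simp
  qed
qed

lemma sample_segment_exists:
  fixes T :: "nat \<Rightarrow> real"
  assumes "T 0 \<le> s" "s < T tau"
  shows "\<exists>l<tau. T l \<le> s \<and> s < T (Suc l)"
  using assms(2)
proof (induction tau)
  case 0
  then show ?case using assms(1) by simp
next
  case (Suc t)
  show ?case
  proof (cases "s < T t")
    case True
    then show ?thesis using Suc.IH less_SucI by blast
  next
    case False
    then show ?thesis using Suc.prems by (intro exI[of _ t]) simp
  qed
qed

lemma continuous_interp:
  assumes T: "\<forall>i<tau. T i < T (Suc i)"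
  shows "continuous_on UNIV (interp T tau f)"
proof -
  define S where "S = (\<Union>l\<in>{..<tau}. {T l..T (Suc l)})"
  have "continuous_on {..T 0} (interp T tau f)"
    by (rule continuous_on_eq[of _ "\<lambda>_. f 0"]) (auto simp: interp_below)
  moreover have "continuous_on {T tau..} (interp T tau f)"
    by (rule continuous_on_eq[of _ "\<lambda>_. f tau"]) (auto simp: interp_above[OF T])
  moreover have "continuous_on S (interp T tau f)"
    unfolding S_def
  proof (rule continuous_on_closed_Union)
    fix l assume "l \<in> {..<tau}"
    have "continuous_on {T l..T (Suc l)}
        (\<lambda>s. f l + (s - T l) / (T (Suc l) - T l) * (f (Suc l) - f l))"
      using T \<open>l \<in> {..<tau}\<close> by (intro continuous_intros) auto
    then show "continuous_on {T l..T (Suc l)} (interp T tau f)"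
      by (rule continuous_on_eq) (use interp_segment[OF T] \<open>l \<in> {..<tau}\<close> in auto)
  qed auto
  ultimately have "continuous_on ({..T 0} \<union> {T tau..} \<union> S) (interp T tau f)"
    unfolding S_def by (intro continuous_on_closed_Un closed_Un closed_UN) auto
  moreover have "{..T 0} \<union> {T tau..} \<union> S = UNIV"
  proof -
    have "s \<in> S" if "T 0 < s" "s < T tau" for s
      using sample_segment_exists[of T s tau] that unfolding S_def by fastforce
    then show ?thesis by (auto simp: not_le) (meson not_le)
  qed
  ultimately show ?thesis by simp
qed

section \<open>Events, change times and components\<close>

lemma dconn_pair_eq:
  "{x, y} = {x', y'} \<Longrightarrow> dconn tau T P eps x y s = dconn tau T P eps x' y' s"
  by (auto simp: doubleton_eq_iff dconn_def dist_commute)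

lemma isCont_level_crossing:
  fixes f :: "real \<Rightarrow> real"
  assumes cont: "isCont f s"
    and crossing_time: "\<forall>\<delta>>0. \<exists>s1 s2. \<bar>s1 - s\<bar> < \<delta> \<and> \<bar>s2 - s\<bar> < \<delta> \<and> f s1 \<le> a \<and> \<not> f s2 \<le> a"
  shows "f s = a"
proof (rule ccontr)
  assume "f s \<noteq> a"
  have lim: "(f \<longlongrightarrow> f s) (nhds s)"
    using cont by (simp add: isCont_def tendsto_at_iff_tendsto_nhds)
  have "eventually (\<lambda>t. f t < a) (nhds s) \<or> eventually (\<lambda>t. a < f t) (nhds s)"
    using order_tendstoD[OF lim] \<open>f s \<noteq> a\<close> by (cases "f s < a") auto
  then obtain \<delta> where "\<delta> > 0" "(\<forall>t. \<bar>t - s\<bar> < \<delta> \<longrightarrow> f t < a) \<or> (\<forall>t. \<bar>t - s\<bar> < \<delta> \<longrightarrow> a < f t)"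
    unfolding eventually_nhds_metric dist_real_def by blast
  then show False using crossing_time by force
qed

lemma event_imp_dist_eq:
  assumes "isCont (\<lambda>s. dist (traj T tau (P x) s) (traj T tau (P y) s)) s"
    and "event n tau T P eps x y s"
  shows "dist (traj T tau (P x) s) (traj T tau (P y) s) = 2 * eps"
  using isCont_level_crossing[OF assms(1)] assms(2) unfolding event_def dconn_def by blast

lemma not_event_imp_eventually_dconn_eq:
  assumes "x < n" "y < n" "T 0 \<le> s" "s \<le> T tau" "\<not> event n tau T P eps x y s"
  shows "eventually (\<lambda>s'. dconn tau T P eps x y s' = dconn tau T P eps x y s) (nhds s)"
proof (cases "x = y")
  case False
  then obtain \<delta> where "\<delta> > 0" and \<delta>: "\<And>s1 s2. \<bar>s1 - s\<bar> < \<delta> \<Longrightarrow> \<bar>s2 - s\<bar> < \<delta> \<Longrightarrow>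
      \<not> (dconn tau T P eps x y s1 \<and> \<not> dconn tau T P eps x y s2)"
    using assms unfolding event_def by blast
  show ?thesis
    unfolding eventually_nhds_metric dist_real_def
    using \<open>\<delta> > 0\<close> \<delta>[of s] \<delta>[of _ s] by (metis abs_zero diff_self)
qed (simp add: dconn_def)

lemma change_time_imp_event:
  assumes "T 0 < s" "s < T tau" "change_time n tau T P eps s"
  shows "\<exists>x y. event n tau T P eps x y s"
proof (rule ccontr)
  assume "\<nexists>x y. event n tau T P eps x y s"
  then have "\<forall>(x, y)\<in>{..<n} \<times> {..<n}.
      eventually (\<lambda>s'. dconn tau T P eps x y s' = dconn tau T P eps x y s) (nhds s)"
    using not_event_imp_eventually_dconn_eq assms(1,2) by fastforce
  then have "eventually (\<lambda>s'. \<forall>(x, y)\<in>{..<n} \<times> {..<n}.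
      dconn tau T P eps x y s' = dconn tau T P eps x y s) (nhds s)"
    by (intro eventually_ball_finite) auto
  then have "eventually (\<lambda>s'. conn_rel n tau T P eps s' = conn_rel n tau T P eps s) (nhds s)"
    by eventually_elim (auto simp: conn_rel_def)
  then have "eventually (\<lambda>s'. comps n tau T P eps s' = comps n tau T P eps s) (nhds s)"
    by eventually_elim (simp add: comps_def)
  then show False
    using assms(3) unfolding change_time_def eventually_nhds_metric dist_real_def by blast
qed

lemma comps_eq_without_change_time:
  assumes "\<forall>t\<in>{a<..<b}. \<not> change_time n tau T P eps t"
    and "t1 \<in> {a<..<b}" "t2 \<in> {a<..<b}"
  shows "comps n tau T P eps t1 = comps n tau T P eps t2"
proof (rule connected_local_const[of "{a<..<b}"])
  show "\<forall>t\<in>{a<..<b}. eventually (\<lambda>t'. comps n tau T P eps t = comps n tau T P eps t')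
      (at t within {a<..<b})"
    using assms(1) unfolding change_time_def eventually_at dist_real_def by metis
qed (use assms in auto)

lemma finite_components_Union:
  assumes "finite F" "\<And>A. A \<in> F \<Longrightarrow> connected A"
  shows "finite (components (\<Union>F))"
proof -
  have "components (\<Union>F) \<subseteq> (\<lambda>A. connected_component_set (\<Union>F) (SOME a. a \<in> A)) ` F"
  proof
    fix K assume "K \<in> components (\<Union>F)"
    then obtain x where x: "x \<in> \<Union>F" "K = connected_component_set (\<Union>F) x"
      by (auto simp: components_iff)
    then obtain A where A: "A \<in> F" "x \<in> A" by blast
    have "A \<subseteq> K" using connected_component_maximal[OF A(2) assms(2)[OF A(1)]] A x by blast
    moreover have "(SOME a. a \<in> A) \<in> A" using A(2) by (rule someI)
    ultimately have "connected_component_set (\<Union>F) (SOME a. a \<in> A) = K"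
      using x by (metis connected_component_eq mem_Collect_eq subsetD)
    then show "K \<in> (\<lambda>A. connected_component_set (\<Union>F) (SOME a. a \<in> A)) ` F" using A(1) by blast
  qed
  then show ?thesis using assms(1) finite_subset by blast
qed

lemma finite_set_gap:
  fixes E :: "'a::linorder set"
  assumes "finite E" "l \<in> E" "u \<in> E" "l < s" "s < u" "s \<notin> E"
  obtains a b where "a \<in> E" "b \<in> E" "a < s" "s < b" "\<And>t. a < t \<Longrightarrow> t < b \<Longrightarrow> t \<notin> E"
proof
  define a where "a = Max {e \<in> E. e < s}"
  define b where "b = Min {e \<in> E. s < e}"
  have "a \<in> {e \<in> E. e < s}" "b \<in> {e \<in> E. s < e}"
    unfolding a_def b_def using assms by (intro Max_in Min_in; auto)+
  then show "a \<in> E" "b \<in> E" "a < s" "s < b" by auto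
  show "t \<notin> E" if "a < t" "t < b" for t
  proof
    assume "t \<in> E"
    then have "t \<noteq> s" using assms(6) by blast
    then consider "t < s" | "s < t" by (meson linorder_neqE)
    then show False
    proof cases
      case 1
      have "t \<le> a" unfolding a_def using assms(1) \<open>t \<in> E\<close> 1 by (intro Max_ge) auto
      then show False using that by simp
    next
      case 2
      have "b \<le> t" unfolding b_def using assms(1) \<open>t \<in> E\<close> 2 by (intro Min_le) auto
      then show False using that by simp
    qed
  qed
qed

text \<open>Between consecutive change times the components do not change, so a lifetime is a finite
  union of sample/change times and open intervals between consecutive ones.\<close>

lemma finite_components_lifetime:
  assumes fin: "finite {s. T 0 < s \<and> s < T tau \<and> change_time n tau T P eps s}"
  shows "finite (components (lifetime n tau T P eps C))"
proof -
  define L where "L = lifetime n tau T P eps C"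
  define E where "E = {T 0, T tau} \<union> {s. T 0 < s \<and> s < T tau \<and> change_time n tau T P eps s}"
  define F where "F = {{e} | e. e \<in> E \<inter> L} \<union> {{a<..<b} | a b. a \<in> E \<and> b \<in> E \<and> {a<..<b} \<subseteq> L}"
  have "finite E" using fin by (simp add: E_def)
  have "L \<subseteq> \<Union>F"
  proof
    fix s assume "s \<in> L"
    show "s \<in> \<Union>F"
    proof (cases "s \<in> E")
      case True
      then show ?thesis using \<open>s \<in> L\<close> unfolding F_def by blast
    next
      case False
      then have s: "T 0 < s" "s < T tau"
        using \<open>s \<in> L\<close> unfolding L_def lifetime_def E_def by auto
      then have E_range: "T 0 \<le> e \<and> e \<le> T tau" if "e \<in> E" for e
        using that unfolding E_def by auto
      have "T 0 \<in> E" "T tau \<in> E" unfolding E_def by auto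
      then obtain a b where ab: "a \<in> E" "b \<in> E" "a < s" "s < b"
        and gap: "\<And>t. a < t \<Longrightarrow> t < b \<Longrightarrow> t \<notin> E"
        by (rule finite_set_gap[OF \<open>finite E\<close> _ _ s False]) blast
      have no_change: "\<forall>t\<in>{a<..<b}. \<not> change_time n tau T P eps t"
        using gap E_range[OF ab(1)] E_range[OF ab(2)] unfolding E_def by fastforce
      have "{a<..<b} \<subseteq> L"
      proof
        fix t assume t: "t \<in> {a<..<b}"
        have "comps n tau T P eps t = comps n tau T P eps s"
          using comps_eq_without_change_time[OF no_change t] ab by simp
        moreover have "C \<in> comps n tau T P eps s" using \<open>s \<in> L\<close> unfolding L_def lifetime_def by simp
        moreover have "T 0 \<le> t" "t \<le> T tau" using t E_range[OF ab(1)] E_range[OF ab(2)] by auto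
        ultimately show "t \<in> L" unfolding L_def lifetime_def by simp
      qed
      then have "{a<..<b} \<in> F" unfolding F_def using ab by blast
      then show ?thesis using ab by (intro UnionI[of "{a<..<b}"]) auto
    qed
  qed
  then have "L = \<Union>F" unfolding F_def by blast
  moreover have "F \<subseteq> (\<lambda>e. {e}) ` E \<union> (\<lambda>(a, b). {a<..<b}) ` (E \<times> E)"
    unfolding F_def by auto
  then have "finite F"
    using \<open>finite E\<close> by (meson finite_SigmaI finite_UnI finite_imageI finite_subset)
  moreover have "\<And>A. A \<in> F \<Longrightarrow> connected A" unfolding F_def by auto
  ultimately show ?thesis unfolding L_def using finite_components_Union by metis
qed

lemma finite_reeb_edges:
  assumes "finite {s. T 0 < s \<and> s < T tau \<and> change_time n tau T P eps s}"
  shows "finite (reeb_edges n tau T P eps)"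
proof (rule finite_subset)
  show "reeb_edges n tau T P eps \<subseteq> Sigma (Pow {..<n}) (\<lambda>C. components (lifetime n tau T P eps C))"
    unfolding reeb_edges_def by auto
  show "finite (Sigma (Pow {..<n}) (\<lambda>C. components (lifetime n tau T P eps C)))"
    using finite_components_lifetime[OF assms] by (intro finite_SigmaI) auto
qed

lemma pair_in_comps_iff:
  assumes partner_unique: "\<And>x y z. x < n \<Longrightarrow> y < n \<Longrightarrow> z < n \<Longrightarrow> y \<noteq> x \<Longrightarrow> z \<noteq> x \<Longrightarrow>
      dconn tau T P eps x y s \<Longrightarrow> dconn tau T P eps x z s \<Longrightarrow> y = z"
    and "x < n" "y < n" "x \<noteq> y"
  shows "{x, y} \<in> comps n tau T P eps s \<longleftrightarrow> dconn tau T P eps x y s"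
proof -
  define R where "R = conn_rel n tau T P eps s"
  have sym: "(b, a) \<in> R" if "(a, b) \<in> R" for a b
    using that dconn_pair_eq[of a b b a, OF insert_commute] unfolding R_def conn_rel_def by auto
  have "trans (R\<^sup>=)"
  proof (rule transI)
    fix a b c assume ab: "(a, b) \<in> R\<^sup>=" and bc: "(b, c) \<in> R\<^sup>="
    show "(a, c) \<in> R\<^sup>="
    proof (cases "a = b \<or> b = c")
      case False
      then have "(b, a) \<in> R" "(b, c) \<in> R" using ab bc sym by auto
      then have "a = c" using partner_unique[of b a c] False unfolding R_def conn_rel_def by auto
      then show ?thesis by simp
    qed (use ab bc in auto)
  qed
  then have "R\<^sup>* = R\<^sup>=" using trancl_reflcl[of R] trancl_id by metis
  then have component: "R\<^sup>* `` {z} = insert z (R `` {z})" for z by auto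
  have R: "(a, b) \<in> R \<longleftrightarrow> a < n \<and> b < n \<and> dconn tau T P eps a b s" for a b
    unfolding R_def conn_rel_def by simp
  show ?thesis
  proof
    assume "{x, y} \<in> comps n tau T P eps s"
    then obtain z where "z < n" and xy: "{x, y} = insert z (R `` {z})"
      unfolding comps_def R_def[symmetric] by (auto elim!: quotientE simp: component)
    then have "x \<in> insert z (R `` {z})" "y \<in> insert z (R `` {z})" by auto
    then consider "x = z" "(z, y) \<in> R" | "y = z" "(z, x) \<in> R"
      | "(z, x) \<in> R" "(z, y) \<in> R" "x \<noteq> z" "y \<noteq> z"
      using assms(4) by blast
    then show "dconn tau T P eps x y s"
    proof cases
      case 3
      then have "x = y" using partner_unique[of z x y] unfolding R by blast
      then show ?thesis using assms(4) by simp
    qed (use R sym in auto)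
  next
    assume "dconn tau T P eps x y s"
    then have "(x, y) \<in> R" using assms(2,3) R by blast
    moreover have "z = y" if "(x, z) \<in> R" "z \<noteq> x" for z
      using partner_unique[of x y z] that calculation assms(4) unfolding R by blast
    ultimately have "R\<^sup>* `` {x} = {x, y}" unfolding component by blast
    moreover have "R\<^sup>* `` {x} \<in> {..<n} // R\<^sup>*" using assms(2) by (intro quotientI) simp
    ultimately show "{x, y} \<in> comps n tau T P eps s" unfolding comps_def R_def by simp
  qed
qed

lemma Icc_in_components:
  fixes a b \<delta> :: real
  assumes "a \<le> b" "{a..b} \<subseteq> S" "\<delta> > 0"
    and left: "\<And>t. a - \<delta> < t \<Longrightarrow> t < a \<Longrightarrow> t \<notin> S"
    and right: "\<And>t. b < t \<Longrightarrow> t < b + \<delta> \<Longrightarrow> t \<notin> S"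
  shows "{a..b} \<in> components S"
  unfolding in_components_maximal
proof (intro conjI allI impI)
  fix D assume D: "D \<noteq> {} \<and> {a..b} \<subseteq> D \<and> D \<subseteq> S \<and> connected D"
  then have "a \<in> D" using assms(1) by auto
  have "d \<in> {a..b}" if "d \<in> D" for d
  proof (rule ccontr)
    assume "d \<notin> {a..b}"
    then consider "b < d" | "d < a" by fastforce
    then show False
    proof cases
      case 1
      have "min d (b + \<delta> / 2) \<in> {a..d}" using 1 assms(1,3) by auto
      then have "min d (b + \<delta> / 2) \<in> S"
        using connected_contains_Icc[of D a d] D \<open>a \<in> D\<close> that by blast
      then show False using right[of "min d (b + \<delta> / 2)"] 1 assms(3) by auto
    next
      case 2
      have "max d (a - \<delta> / 2) \<in> {d..a}" using 2 assms(3) by auto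
      then have "max d (a - \<delta> / 2) \<in> S"
        using connected_contains_Icc[of D d a] D \<open>a \<in> D\<close> that by blast
      then show False using left[of "max d (a - \<delta> / 2)"] 2 assms(3) by auto
    qed
  qed
  then show "D = {a..b}" using D by blast
qed (use assms in auto)

section \<open>The zigzag configuration\<close>

lemma abs_unit_shift_le_one:
  fixes d t :: real
  assumes "d = 1 \<or> d = -1" "\<bar>t\<bar> \<le> 1"
  shows "\<bar>d + t\<bar> \<le> 1 \<longleftrightarrow> d * t \<le> 0"
  using assms by (auto simp: abs_le_iff)

locale reeb_zigzag =
  fixes k m tau :: nat
  assumes k_pos: "0 < k"
begin

definition W :: real where "W = 3 * real k * real m + 2"

definition grid :: "nat \<Rightarrow> real" where "grid i = W * real i"

definition zig :: "nat \<Rightarrow> real" where "zig l = (if even l then 0 else W)"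

definition sweep :: "real \<Rightarrow> real" where "sweep = interp grid tau zig"

definition base :: "nat \<Rightarrow> real" where
  "base x = (if x < k then 3 * real x else - 2 - 3 * real k * real (x - k))"

definition moving :: "nat \<Rightarrow> real" where "moving x = (if x < k then 0 else 1)"

definition pos :: "nat \<Rightarrow> real \<Rightarrow> real" where "pos x s = base x + moving x * sweep s"

definition P :: "nat \<Rightarrow> nat \<Rightarrow> real^2" where
  "P x l = (base x + moving x * zig l) *\<^sub>R axis 1 1"

definition level :: "nat \<Rightarrow> nat \<Rightarrow> nat" where "level i j = 3 * (j + k * i) + 2"

definition slope :: "nat \<Rightarrow> real" where "slope l = (if even l then 1 else -1)"

text \<open>For 0 \<le> v \<le> W, the time on edge l at which the sweep passes through v.\<close>

definition crossing_time :: "nat \<Rightarrow> real \<Rightarrow> real" where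
  "crossing_time l v = W * real l + (if even l then v else W - v)"

abbreviation D :: "nat \<Rightarrow> nat \<Rightarrow> real \<Rightarrow> bool" where
  "D x y s \<equiv> dconn tau grid P (1/2) x y s"

abbreviation Ev :: "nat \<Rightarrow> nat \<Rightarrow> real \<Rightarrow> bool" where
  "Ev x y s \<equiv> event (k + m) tau grid P (1/2) x y s"

abbreviation Comps :: "real \<Rightarrow> nat set set" where
  "Comps s \<equiv> comps (k + m) tau grid P (1/2) s"

lemma W_pos: "0 < W"
proof -
  have "0 \<le> 3 * real k * real m" by simp
  then show ?thesis unfolding W_def by linarith
qed

lemma grid_step: "\<forall>i<tau. grid i < grid (Suc i)"
  using W_pos by (simp add: grid_def)

lemma sweep_on_edge:
  assumes "l < tau" "W * real l \<le> s" "s \<le> W * real (Suc l)"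
  shows "sweep s = zig l + slope l * (s - W * real l)"
proof -
  have "grid l \<le> s" "s \<le> grid (Suc l)" using assms by (simp_all add: grid_def)
  then have "sweep s = zig l + (s - grid l) / (grid (Suc l) - grid l) * (zig (Suc l) - zig l)"
    unfolding sweep_def by (rule interp_segment[OF grid_step assms(1)])
  moreover have "grid (Suc l) - grid l = W" by (simp add: grid_def algebra_simps)
  ultimately show ?thesis using W_pos by (simp add: zig_def slope_def grid_def)
qed

lemma sweep_outside: "s \<le> 0 \<or> W * real tau \<le> s \<Longrightarrow> sweep s = 0 \<or> sweep s = W"
  using interp_below[of s grid tau zig] interp_above[OF grid_step, of s zig]
  unfolding sweep_def grid_def zig_def by auto

lemma sweep_near_crossing:
  assumes "l < tau" "0 \<le> v" "v \<le> W" "\<bar>t\<bar> \<le> min v (W - v)"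
  shows "sweep (crossing_time l v + t) = v + slope l * t"
proof -
  have "W * real l \<le> crossing_time l v + t" "crossing_time l v + t \<le> W * real (Suc l)"
    using assms by (auto simp: crossing_time_def algebra_simps abs_le_iff)
  then show ?thesis
    using sweep_on_edge[OF assms(1)] by (auto simp: crossing_time_def zig_def slope_def)
qed

lemma sweep_eq_imp_crossing_time:
  assumes "0 < v" "v < W" "sweep s = v"
  shows "\<exists>l<tau. s = crossing_time l v"
proof -
  have s: "0 < s" "s < W * real tau" using sweep_outside[of s] assms by force+
  then obtain l where l: "l < tau" "W * real l \<le> s" "s < W * real (Suc l)"
    using sample_segment_exists[of grid s tau] unfolding grid_def by auto
  then have "s = crossing_time l v"
    using sweep_on_edge[OF l(1,2)] assms(3) by (auto simp: crossing_time_def zig_def slope_def)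
  then show ?thesis using l(1) by blast
qed

lemma crossing_time_bounds:
  assumes "0 < v" "v < W"
  shows "W * real l < crossing_time l v" "crossing_time l v < W * real (Suc l)"
  using assms by (auto simp: crossing_time_def algebra_simps)

lemma crossing_time_inj:
  assumes "0 < v" "v < W" "0 < v'" "v' < W" "crossing_time l v = crossing_time l' v'"
  shows "l = l' \<and> v = v'"
proof -
  have "W * real l < W * real (Suc l')" "W * real l' < W * real (Suc l)"
    using crossing_time_bounds[OF assms(1,2), of l] crossing_time_bounds[OF assms(3,4), of l']
      assms(5) by linarith+
  then have "l < Suc l'" "l' < Suc l"
    using W_pos by (simp_all only: mult_less_cancel_left_pos of_nat_less_iff)
  then have "l = l'" by simp
  then show ?thesis using assms(5) by (auto simp: crossing_time_def split: if_splits)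
qed

lemma isCont_sweep: "isCont sweep s"
  using continuous_interp[OF grid_step, of zig]
  unfolding sweep_def by (simp add: continuous_on_eq_continuous_at)

lemma traj_P: "traj grid tau (P x) s = pos x s *\<^sub>R axis 1 1"
  using traj_line[of grid tau "base x" "moving x" zig "axis 1 1" s]
  unfolding P_def pos_def sweep_def by simp

lemma dist_traj_P: "dist (traj grid tau (P x) s) (traj grid tau (P y) s) = \<bar>pos x s - pos y s\<bar>"
  unfolding traj_P dist_norm by (simp add: scaleR_diff_left[symmetric])

lemma dconn_iff: "D x y s \<longleftrightarrow> \<bar>pos x s - pos y s\<bar> \<le> 1"
  unfolding dconn_def dist_traj_P by simp

lemma same_kind_apart:
  assumes "x \<noteq> y" "(x < k) = (y < k)"
  shows "3 \<le> \<bar>pos x s - pos y s\<bar>"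
proof (cases "x < k")
  case True
  have "1 \<le> \<bar>real x - real y\<bar>" using assms(1) by (cases "x < y") auto
  moreover have "pos x s - pos y s = 3 * (real x - real y)"
    using True assms(2) by (simp add: pos_def base_def moving_def algebra_simps)
  ultimately show ?thesis by (simp add: abs_mult)
next
  case False
  have "1 \<le> \<bar>real (y - k) - real (x - k)\<bar>" using assms False by (cases "x < y") auto
  moreover have "1 \<le> real k" using k_pos by simp
  ultimately have "1 \<le> real k * \<bar>real (y - k) - real (x - k)\<bar>"
    using mult_mono[of 1 "real k" 1] by fastforce
  moreover have "pos x s - pos y s = 3 * (real k * (real (y - k) - real (x - k)))"
    using False assms(2) by (simp add: pos_def base_def moving_def algebra_simps)
  ultimately show ?thesis by (simp add: abs_mult)
qed

lemma pos_stationary_minus_mover: "j < k \<Longrightarrow> pos j s - pos (k + i) s = real (level i j) - sweep s"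
  by (simp add: pos_def base_def moving_def level_def algebra_simps)

lemma dconn_pair_iff: "j < k \<Longrightarrow> D j (k + i) s \<longleftrightarrow> \<bar>sweep s - real (level i j)\<bar> \<le> 1"
  by (simp add: dconn_iff pos_stationary_minus_mover abs_minus_commute)

lemma level_bounds:
  assumes "i < m" "j < k"
  shows "2 \<le> level i j" "real (level i j) + 3 \<le> W"
proof -
  have "j + k * i + 1 \<le> k * m"
    using assms by (metis Suc_eq_plus1 Suc_leI add_Suc add_le_mono1 mult_Suc_right mult_le_mono2
        le_trans add.commute)
  then have "real (j + k * i) + 1 \<le> real k * real m"
    by (metis of_nat_1 of_nat_add of_nat_le_iff of_nat_mult)
  then show "2 \<le> level i j" "real (level i j) + 3 \<le> W"
    unfolding level_def W_def by simp_all
qed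

lemma level_inj:
  assumes "j < k" "j' < k" "level i j = level i' j'"
  shows "i = i' \<and> j = j'"
proof -
  have v: "j + k * i = j' + k * i'" using assms(3) by (simp add: level_def)
  have "j = j'" using arg_cong[OF v, of "\<lambda>a. a mod k"] assms(1,2) by simp
  moreover have "i = i'" using arg_cong[OF v, of "\<lambda>a. a div k"] assms(1,2) by simp
  ultimately show ?thesis by simp
qed

lemma dconn_imp_mixed_pair:
  assumes "x < k + m" "y < k + m" "x \<noteq> y" "D x y s"
  shows "\<exists>i<m. \<exists>j<k. {x, y} = {j, k + i}"
proof -
  have "(x < k) \<noteq> (y < k)"
    using same_kind_apart[OF assms(3), of s] assms(4) unfolding dconn_iff by fastforce
  then consider "x < k" "k \<le> y" | "y < k" "k \<le> x" by fastforce
  then show ?thesis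
  proof cases
    case 1
    then have "y - k < m" "{x, y} = {x, k + (y - k)}" using assms(2) by auto
    then show ?thesis using 1 by blast
  next
    case 2
    then have "x - k < m" "{x, y} = {y, k + (x - k)}" using assms(1) by auto
    then show ?thesis using 2 by blast
  qed
qed

lemma partner_unique:
  assumes "y \<noteq> x" "z \<noteq> x" "D x y s" "D x z s"
  shows "y = z"
proof (rule ccontr)
  assume "y \<noteq> z"
  have xy: "\<bar>pos x s - pos y s\<bar> \<le> 1" and xz: "\<bar>pos x s - pos z s\<bar> \<le> 1"
    using assms(3,4) unfolding dconn_iff by auto
  then have "\<bar>pos y s - pos z s\<bar> \<le> 2" by linarith
  then have "(y < k) \<noteq> (z < k)" using same_kind_apart[OF \<open>y \<noteq> z\<close>, of s] by fastforce
  then consider "(x < k) = (y < k)" | "(x < k) = (z < k)" by blast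
  then show False
    using same_kind_apart[of x y s] same_kind_apart[of x z s] assms(1,2) xy xz by cases auto
qed


lemma mixed_pair_in_comps_iff: "i < m \<Longrightarrow> j < k \<Longrightarrow>
    {j, k + i} \<in> Comps s \<longleftrightarrow> D j (k + i) s"
  by (rule pair_in_comps_iff) (auto intro: partner_unique)

lemma dconn_near_center:
  assumes "i < m" "j < k" "l < tau" "\<bar>t\<bar> \<le> 2"
  shows "D j (k + i) (crossing_time l (level i j) + t) \<longleftrightarrow> \<bar>t\<bar> \<le> 1"
proof -
  have "sweep (crossing_time l (level i j) + t) = real (level i j) + slope l * t"
    using sweep_near_crossing[OF assms(3)] level_bounds[OF assms(1,2)] assms(4) by simp
  then show ?thesis using dconn_pair_iff[OF assms(2)] by (simp add: slope_def)
qed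

lemma window_inside_span:
  assumes "i < m" "j < k" "l < tau" "\<bar>t\<bar> \<le> 1"
  shows "0 < crossing_time l (level i j) + t" "crossing_time l (level i j) + t < W * real tau"
proof -
  have "W * real l + 1 \<le> crossing_time l (level i j) + t"
    "crossing_time l (level i j) + t \<le> W * real l + W - 1"
    using level_bounds[OF assms(1,2)] assms(4) by (auto simp: crossing_time_def abs_le_iff)
  moreover have "W * real l + W \<le> W * real tau"
    using assms(3) W_pos mult_left_mono[of "real (Suc l)" "real tau" W] by (simp add: algebra_simps)
  moreover have "0 \<le> W * real l" using W_pos by simp
  ultimately show "0 < crossing_time l (level i j) + t"
    "crossing_time l (level i j) + t < W * real tau" by linarith+
qed

lemma event_imp_level_crossing:
  assumes ev: "Ev x y s"
  shows "\<exists>i<m. \<exists>j<k. {x, y} = {j, k + i} \<and> (\<exists>d. (d = 1 \<or> d = -1) \<and> sweep s = real (level i j) + d)"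
proof -
  have xy: "x < k + m" "y < k + m" "x \<noteq> y" and "\<exists>s1. D x y s1"
    using ev unfolding event_def by (auto dest: spec[of _ 1])
  then obtain i j where ij: "i < m" "j < k" "{x, y} = {j, k + i}"
    using dconn_imp_mixed_pair by blast
  have "isCont (\<lambda>s. dist (traj grid tau (P x) s) (traj grid tau (P y) s)) s"
    unfolding dist_traj_P pos_def using isCont_sweep by (intro continuous_intros)
  then have "\<bar>pos x s - pos y s\<bar> = 1" using event_imp_dist_eq[OF _ ev] dist_traj_P by simp
  then have "\<bar>pos j s - pos (k + i) s\<bar> = 1"
    using ij(3) by (auto simp: doubleton_eq_iff abs_minus_commute)
  then have "\<bar>sweep s - real (level i j)\<bar> = 1"
    by (simp add: pos_stationary_minus_mover[OF ij(2)] abs_minus_commute)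
  then have "sweep s = real (level i j) + 1 \<or> sweep s = real (level i j) + -1"
    by (auto simp: abs_eq_iff)
  then show ?thesis using ij by blast
qed

lemma event_is_clean:
  assumes ev: "Ev x y s"
  shows "\<exists>\<delta>>0. \<exists>b. (\<forall>s'. s - \<delta> < s' \<and> s' < s \<longrightarrow> D x y s' = b) \<and>
                   (\<forall>s'. s < s' \<and> s' < s + \<delta> \<longrightarrow> D x y s' = (\<not> b))"
proof -
  obtain i j d where ij: "i < m" "j < k" "{x, y} = {j, k + i}" and d: "d = 1 \<or> d = -1"
    and sw: "sweep s = real (level i j) + d"
    using event_imp_level_crossing[OF ev] by blast
  define v where "v = real (level i j) + d"
  have v: "1 \<le> v" "v + 2 \<le> W" using level_bounds[OF ij(1,2)] d unfolding v_def by auto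
  then obtain l where l: "l < tau" "s = crossing_time l v"
    using sweep_eq_imp_crossing_time[of v s] sw unfolding v_def by auto
  have dconn_near: "D x y (s + t) \<longleftrightarrow> d * (slope l * t) \<le> 0" if "\<bar>t\<bar> \<le> 1" for t
  proof -
    have "sweep (s + t) = v + slope l * t"
      using sweep_near_crossing[OF l(1), of v t] v that l(2) by simp
    moreover have "\<bar>slope l * t\<bar> \<le> 1" using that by (simp add: slope_def)
    ultimately show ?thesis
      using dconn_pair_eq[OF ij(3)] dconn_pair_iff[OF ij(2)] abs_unit_shift_le_one[OF d]
      unfolding v_def
      by (simp add: add.assoc)
  qed
  have "slope l = 1 \<or> slope l = -1" by (simp add: slope_def)
  then have "(\<forall>s'. s - 1 < s' \<and> s' < s \<longrightarrow> D x y s' = (0 < d * slope l)) \<and>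
      (\<forall>s'. s < s' \<and> s' < s + 1 \<longrightarrow> D x y s' = (\<not> 0 < d * slope l))"
    using dconn_near[of "_ - s"] d by (auto simp: mult_le_0_iff)
  then show ?thesis by (intro exI[of _ 1]) auto
qed

lemma event_unique:
  assumes "Ev x y s" "Ev x' y' s"
  shows "{x, y} = {x', y'}"
proof -
  obtain i j d where ij: "i < m" "j < k" "{x, y} = {j, k + i}" and d: "d = 1 \<or> d = -1"
    and sw: "sweep s = real (level i j) + d"
    using event_imp_level_crossing[OF assms(1)] by blast
  obtain i' j' d' where ij': "i' < m" "j' < k" "{x', y'} = {j', k + i'}" and d': "d' = 1 \<or> d' = -1"
    and sw': "sweep s = real (level i' j') + d'"
    using event_imp_level_crossing[OF assms(2)] by blast
  have "real (level i j) = real (level i' j') \<or> real (level i j) = real (level i' j' + 2) \<or>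
      real (level i j + 2) = real (level i' j')"
    using sw sw' d d' by auto
  then have "level i j = level i' j' \<or> level i j = level i' j' + 2 \<or> level i j + 2 = level i' j'"
    by (simp only: of_nat_eq_iff)
  then have "level i j = level i' j'"
    \<comment> \<open>levels are 2 modulo 3\<close>
    unfolding level_def by presburger
  then show ?thesis using level_inj[OF ij(2) ij'(2), of i i'] ij(3) ij'(3) by simp
qed

lemma zigzag_general_position: "general_position (k + m) tau grid P (1/2)"
  unfolding general_position_def using event_is_clean event_unique by blast

abbreviation change_times :: "real set" where
  "change_times \<equiv> {s. grid 0 < s \<and> s < grid tau \<and> change_time (k + m) tau grid P (1/2) s}"

lemma change_times_subset:
  "change_times \<subseteq> (\<lambda>(l, i, j, d). crossing_time l (real (level i j) + d))
     ` ({..<tau} \<times> {..<m} \<times> {..<k} \<times> {-1, 1})"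
proof
  fix s assume "s \<in> change_times"
  then obtain x y where "Ev x y s"
    using change_time_imp_event by blast
  then obtain i j d where ij: "i < m" "j < k" and d: "d = 1 \<or> d = -1"
    and sw: "sweep s = real (level i j) + d"
    using event_imp_level_crossing by blast
  then have "0 < real (level i j) + d" "real (level i j) + d < W" using level_bounds[OF ij] by auto
  then obtain l where "l < tau" "s = crossing_time l (real (level i j) + d)"
    using sweep_eq_imp_crossing_time sw by blast
  then show "s \<in> (\<lambda>(l, i, j, d). crossing_time l (real (level i j) + d))
      ` ({..<tau} \<times> {..<m} \<times> {..<k} \<times> {-1, 1})"
    using ij d by force
qed

lemma finite_change_times: "finite change_times"
  by (rule finite_subset[OF change_times_subset]) auto

lemma window_start_is_change_time:
  assumes "l < tau" "i < m" "j < k"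
  shows "change_time (k + m) tau grid P (1/2) (crossing_time l (level i j) - 1)"
  unfolding change_time_def
proof
  define c where "c = crossing_time l (level i j)"
  assume "\<exists>\<delta>>0. \<forall>s'. \<bar>s' - (c - 1)\<bar> < \<delta> \<longrightarrow>
      Comps s' = Comps (c - 1)"
  then obtain \<delta> where "\<delta> > 0" and \<delta>: "\<And>s'. \<bar>s' - (c - 1)\<bar> < \<delta> \<Longrightarrow>
      Comps s' = Comps (c - 1)" by blast
  define t where "t = - 1 - min \<delta> 1 / 2"
  have "\<bar>(c + t) - (c - 1)\<bar> < \<delta>" using \<open>\<delta> > 0\<close> by (simp add: t_def)
  then have "D j (k + i) (c + t) = D j (k + i) (c + - 1)"
    using \<delta> mixed_pair_in_comps_iff[OF assms(2,3)] by (metis diff_conv_add_uminus)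
  moreover have "D j (k + i) (c + - 1)"
    using dconn_near_center[OF assms(2,3,1), of "-1"] c_def by simp
  moreover have "\<not> D j (k + i) (c + t)"
    using dconn_near_center[OF assms(2,3,1), of t] \<open>\<delta> > 0\<close> unfolding c_def t_def by auto
  ultimately show False by simp
qed

lemma inj_on_window_center:
  "inj_on (\<lambda>(l, i, j). crossing_time l (level i j)) ({..<tau} \<times> {..<m} \<times> {..<k})"
proof (rule inj_onI)
  fix x y
  assume "x \<in> {..<tau} \<times> {..<m} \<times> {..<k}" "y \<in> {..<tau} \<times> {..<m} \<times> {..<k}"
    and "(\<lambda>(l, i, j). crossing_time l (level i j)) x = (\<lambda>(l, i, j). crossing_time l (level i j)) y"
  moreover obtain l i j l' i' j' where "x = (l, i, j)" "y = (l', i', j')" by (metis prod_cases3)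
  ultimately have idx: "i < m" "j < k" "i' < m" "j' < k"
    and "crossing_time l (level i j) = crossing_time l' (level i' j')"
    by auto
  moreover have "0 < real (level i j)" "real (level i j) < W"
    "0 < real (level i' j')" "real (level i' j') < W"
    using level_bounds idx by fastforce+
  ultimately have "l = l' \<and> real (level i j) = real (level i' j')" using crossing_time_inj by blast
  then have "l = l'" "level i j = level i' j'" by simp_all
  then show "x = y" using level_inj[OF idx(2,4)] \<open>x = _\<close> \<open>y = _\<close> by blast
qed

lemma card_change_times: "tau * m * k \<le> card change_times"
proof -
  define A where "A = {..<tau} \<times> {..<m} \<times> {..<k}"
  define c where "c = (\<lambda>(l, i, j). crossing_time l (level i j))"
  have "c (l, i, j) - 1 \<in> change_times" if "l < tau" "i < m" "j < k" for l i j
    using window_start_is_change_time[OF that] window_inside_span[OF that(2,3,1), of "-1"]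
    by (simp add: c_def grid_def)
  then have "(\<lambda>x. c x - 1) ` A \<subseteq> change_times" unfolding A_def by auto
  moreover have "inj_on (\<lambda>x. c x - 1) A"
    using inj_on_window_center unfolding A_def c_def inj_on_def by simp
  then have "card ((\<lambda>x. c x - 1) ` A) = tau * m * k"
    by (simp add: card_image A_def card_cartesian_product)
  ultimately show ?thesis using card_mono[OF finite_change_times, of "(\<lambda>x. c x - 1) ` A"] by simp
qed

lemma lifetime_pair:
  "i < m \<Longrightarrow> j < k \<Longrightarrow>
    lifetime (k + m) tau grid P (1/2) {j, k + i} = {s. 0 \<le> s \<and> s \<le> W * real tau \<and> D j (k + i) s}"
  by (auto simp: lifetime_def mixed_pair_in_comps_iff grid_def)

lemma window_in_components:
  assumes "l < tau" "i < m" "j < k"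
  shows "{crossing_time l (level i j) - 1 .. crossing_time l (level i j) + 1}
    \<in> components (lifetime (k + m) tau grid P (1/2) {j, k + i})"
proof -
  define c where "c = crossing_time l (level i j)"
  define L where "L = lifetime (k + m) tau grid P (1/2) {j, k + i}"
  have window: "c + t \<in> L \<longleftrightarrow> \<bar>t\<bar> \<le> 1" if "\<bar>t\<bar> \<le> 2" for t
    using lifetime_pair[OF assms(2,3)] dconn_near_center[OF assms(2,3,1) that]
      window_inside_span[OF assms(2,3,1)]
    unfolding c_def L_def by (auto simp: less_imp_le)
  have "{c - 1..c + 1} \<in> components L"
  proof (rule Icc_in_components[where \<delta> = 1])
    show "{c - 1..c + 1} \<subseteq> L"
    proof
      fix s assume "s \<in> {c - 1..c + 1}"
      then show "s \<in> L" using window[of "s - c"] by (simp add: abs_le_iff)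
    qed
    show "t \<notin> L" if "c - 1 - 1 < t" "t < c - 1" for t
      using window[of "t - c"] that by (simp add: abs_le_iff)
    show "t \<notin> L" if "c + 1 < t" "t < c + 1 + 1" for t
      using window[of "t - c"] that by (simp add: abs_le_iff)
  qed simp_all
  then show ?thesis unfolding c_def L_def .
qed

lemma card_reeb_edges: "tau * m * k \<le> card (reeb_edges (k + m) tau grid P (1/2))"
proof -
  define A where "A = {..<tau} \<times> {..<m} \<times> {..<k}"
  define c where "c = (\<lambda>(l, i, j). crossing_time l (level i j))"
  define e where "e = (\<lambda>(l, i, j). ({j, k + i}, {c (l, i, j) - 1 .. c (l, i, j) + 1}))"
  have "e (l, i, j) \<in> reeb_edges (k + m) tau grid P (1/2)" if "l < tau" "i < m" "j < k" for l i j
    using window_in_components[OF that] that by (simp add: e_def c_def reeb_edges_def)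
  then have "e ` A \<subseteq> reeb_edges (k + m) tau grid P (1/2)" unfolding A_def by auto
  moreover have "inj_on c A" using inj_on_window_center unfolding A_def c_def .
  then have "inj_on e A"
    unfolding inj_on_def e_def by (auto split: prod.splits)
  then have "card (e ` A) = tau * m * k"
    by (simp add: card_image A_def card_cartesian_product)
  ultimately show ?thesis
    using card_mono[OF finite_reeb_edges[OF finite_change_times], of "e ` A"] by simp
qed

end

lemma square_le_8_mul_halves: "2 \<le> n \<Longrightarrow> (real n)^2 \<le> 8 * (real (n - n div 2) * real (n div 2))"
proof -
  assume "2 \<le> n"
  obtain h where "n = 2 * h \<or> n = 2 * h + 1"
    by (metis dvd_mult_div_cancel odd_two_times_div_two_succ)
  then have "n * n \<le> 8 * ((n - n div 2) * (n div 2))"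
  proof
    assume "n = 2 * h + 1"
    then have "n div 2 = h" "n - n div 2 = h + 1" "1 \<le> h" using \<open>2 \<le> n\<close> by simp_all
    then show ?thesis using \<open>n = 2 * h + 1\<close> by (simp add: algebra_simps)
  qed simp
  then have "real (n * n) \<le> real (8 * ((n - n div 2) * (n div 2)))" by (simp only: of_nat_le_iff)
  then show ?thesis by (simp add: power2_eq_square algebra_simps)
qed

theorem lemma1:
  shows "\<exists>c::real>0. \<forall>n tau :: nat. n \<ge> 2 \<and> tau \<ge> 1 \<longrightarrow>
    (\<exists>(eps::real) (T::nat \<Rightarrow> real) (P::nat \<Rightarrow> nat \<Rightarrow> real^2).
        eps \<ge> 0 \<and> (\<forall>i<tau. T i < T (Suc i)) \<and> general_position n tau T P eps \<and>
        real (reeb_vertex_count n tau T P eps) \<ge> c * real tau * (real n)^2 \<and>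
        real (card (reeb_edges n tau T P eps)) \<ge> c * real tau * (real n)^2)"
proof (rule exI[of _ "1/8"], intro conjI allI impI)
  fix n tau :: nat assume "2 \<le> n \<and> 1 \<le> tau"
  define m where "m = n div 2"
  define k where "k = n - m"
  interpret Z: reeb_zigzag k m tau
    using \<open>2 \<le> n \<and> 1 \<le> tau\<close> by unfold_locales (simp add: k_def m_def)
  have n: "k + m = n" unfolding k_def m_def by simp
  have "(real n)^2 \<le> 8 * (real k * real m)"
    using square_le_8_mul_halves \<open>2 \<le> n \<and> 1 \<le> tau\<close> unfolding k_def m_def by blast
  then have "real tau * (real n)^2 \<le> real tau * (8 * (real k * real m))"
    by (simp add: mult_left_mono)
  then have bound: "1/8 * real tau * (real n)^2 \<le> real (tau * m * k)" by (simp add: mult_ac)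
  have "tau * m * k \<le> reeb_vertex_count n tau Z.grid Z.P (1/2)"
    using Z.card_change_times n unfolding reeb_vertex_count_def by simp
  moreover have "tau * m * k \<le> card (reeb_edges n tau Z.grid Z.P (1/2))"
    using Z.card_reeb_edges n by simp
  ultimately show "\<exists>eps T P. eps \<ge> 0 \<and> (\<forall>i<tau. T i < T (Suc i)) \<and> general_position n tau T P eps \<and>
        real (reeb_vertex_count n tau T P eps) \<ge> 1/8 * real tau * (real n)^2 \<and>
        real (card (reeb_edges n tau T P eps)) \<ge> 1/8 * real tau * (real n)^2"
    using Z.grid_step Z.zigzag_general_position n bound
    by (intro exI[of _ "1/2 :: real"] exI[of _ Z.grid] exI[of _ Z.P]) (auto simp del: of_nat_mult)
qed simp

end
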